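(* Let $\Omega\subset\mathbb{R}^2\cong\mathbb{C}$ be a domain and let $\Phi=u+iv$ be an analytic function of $z=x+iy$ in $\Omega$ (with $u,v$ real valued) such that $\Phi_z=\partial_z\Phi$ is bounded and has no zeros in $\Omega$. Let $U$ and $V$ be arbitrary differentiable nonvanishing real valued functions of one real variable, and put $F=U(u)V(v)$, $G=\dfrac{i}{U(u)V(v)}$. For $m=0,\pm1,\pm2,\ldots$ define $$F_m=(\Phi_z)^mF,\quad G_m=(\Phi_z)^mG\qquad\text{for even } m,$$ $$F_m=\frac{(\Phi_z)^m}{U^2(u)}F,\quad G_m=(\Phi_z)^mU^2(u)\,G\qquad\text{for odd } m.$$ Then each $(F_m,G_m)$ is a generating pair in $\Omega$, and for every integer $m$ the pair $(F_{m+1},G_{m+1})$ is a successor of $(F_m,G_m)$. That is, $\{(F_m,G_m)\}_{m\in\mathbb{Z}}$ is a generating sequence in $\Omega$ in which $(F,G)=(F_0,G_0)$ is embedded.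
   Context: Notation: $\partial_{\bar z}=\frac12(\partial_x+i\partial_y)$ and $\partial_z=\frac12(\partial_x-i\partial_y)$; a subscript $\bar z$ or $z$ on a function means application of the corresponding operator. A pair of complex functions $(F,G)$ having partial derivatives in $\Omega$ is a generating pair if $\operatorname{Im}(\overline{F}G)>0$ in $\Omega$. Its characteristic coefficients are $$a_{(F,G)}=-\frac{\overline{F}G_{\bar z}-F_{\bar z}\overline{G}}{F\overline{G}-\overline{F}G},\quad b_{(F,G)}=\frac{FG_{\bar z}-F_{\bar z}G}{F\overline{G}-\overline{F}G},$$ $$A_{(F,G)}=-\frac{\overline{F}G_{z}-F_{z}\overline{G}}{F\overline{G}-\overline{F}G},\quad B_{(F,G)}=\frac{FG_{z}-F_{z}G}{F\overline{G}-\overline{F}G}.$$ A generating pair $(F_1,G_1)$ is called a successor of a generating pair $(F,G)$ if $a_{(F_1,G_1)}=a_{(F,G)}$ and $b_{(F_1,G_1)}=-B_{(F,G)}$. A sequence $\{(F_m,G_m)\}$, $m=0,\pm1,\pm2,\ldots$, of generating pairs is a generating sequence if $(F_{m+1},G_{m+1})$ is a successor of $(F_m,G_m)$ for every $m$. The pair $(F,G)$ is said to be embedded in it if $(F_0,G_0)=(F,G)$. *)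

theory Defs
  imports "HOL-Analysis.Analysis"
begin

definition px :: "(complex \<Rightarrow> complex) \<Rightarrow> complex \<Rightarrow> complex" where
  "px f z = vector_derivative (\<lambda>t::real. f (z + of_real t)) (at 0)"

definition py :: "(complex \<Rightarrow> complex) \<Rightarrow> complex \<Rightarrow> complex" where
  "py f z = vector_derivative (\<lambda>t::real. f (z + \<i> * of_real t)) (at 0)"

definition has_partials_on :: "complex set \<Rightarrow> (complex \<Rightarrow> complex) \<Rightarrow> bool" where
  "has_partials_on \<Omega> f \<longleftrightarrow> (\<forall>z\<in>\<Omega>.
      (\<lambda>t::real. f (z + of_real t)) differentiable (at 0) \<and>
      (\<lambda>t::real. f (z + \<i> * of_real t)) differentiable (at 0))"

definition dzbar :: "(complex \<Rightarrow> complex) \<Rightarrow> complex \<Rightarrow> complex" where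
  "dzbar f z = (px f z + \<i> * py f z) / 2"

definition dz :: "(complex \<Rightarrow> complex) \<Rightarrow> complex \<Rightarrow> complex" where
  "dz f z = (px f z - \<i> * py f z) / 2"

definition generating_pair :: "complex set \<Rightarrow> (complex \<Rightarrow> complex) \<Rightarrow> (complex \<Rightarrow> complex) \<Rightarrow> bool" where
  "generating_pair \<Omega> F G \<longleftrightarrow> has_partials_on \<Omega> F \<and> has_partials_on \<Omega> G \<and>
     (\<forall>z\<in>\<Omega>. Im (cnj (F z) * G z) > 0)"

definition char_a :: "(complex \<Rightarrow> complex) \<Rightarrow> (complex \<Rightarrow> complex) \<Rightarrow> complex \<Rightarrow> complex" where
  "char_a F G z = - (cnj (F z) * dzbar G z - dzbar F z * cnj (G z)) / (F z * cnj (G z) - cnj (F z) * G z)"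

definition char_b :: "(complex \<Rightarrow> complex) \<Rightarrow> (complex \<Rightarrow> complex) \<Rightarrow> complex \<Rightarrow> complex" where
  "char_b F G z = (F z * dzbar G z - dzbar F z * G z) / (F z * cnj (G z) - cnj (F z) * G z)"

definition char_A :: "(complex \<Rightarrow> complex) \<Rightarrow> (complex \<Rightarrow> complex) \<Rightarrow> complex \<Rightarrow> complex" where
  "char_A F G z = - (cnj (F z) * dz G z - dz F z * cnj (G z)) / (F z * cnj (G z) - cnj (F z) * G z)"

definition char_B :: "(complex \<Rightarrow> complex) \<Rightarrow> (complex \<Rightarrow> complex) \<Rightarrow> complex \<Rightarrow> complex" where
  "char_B F G z = (F z * dz G z - dz F z * G z) / (F z * cnj (G z) - cnj (F z) * G z)"

definition successor :: "complex set \<Rightarrow> (complex \<Rightarrow> complex) \<Rightarrow> (complex \<Rightarrow> complex)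
    \<Rightarrow> (complex \<Rightarrow> complex) \<Rightarrow> (complex \<Rightarrow> complex) \<Rightarrow> bool" where
  "successor \<Omega> F1 G1 F G \<longleftrightarrow> generating_pair \<Omega> F1 G1 \<and> generating_pair \<Omega> F G \<and>
     (\<forall>z\<in>\<Omega>. char_a F1 G1 z = char_a F G z \<and> char_b F1 G1 z = - char_B F G z)"

definition generating_sequence :: "complex set \<Rightarrow> (int \<Rightarrow> (complex \<Rightarrow> complex) \<times> (complex \<Rightarrow> complex)) \<Rightarrow> bool" where
  "generating_sequence \<Omega> S \<longleftrightarrow> (\<forall>m. generating_pair \<Omega> (fst (S m)) (snd (S m)) \<and>
      successor \<Omega> (fst (S (m+1))) (snd (S (m+1))) (fst (S m)) (snd (S m)))"

definition embedded_in :: "complex set \<Rightarrow> (complex \<Rightarrow> complex) \<Rightarrow> (complex \<Rightarrow> complex)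
    \<Rightarrow> (int \<Rightarrow> (complex \<Rightarrow> complex) \<times> (complex \<Rightarrow> complex)) \<Rightarrow> bool" where
  "embedded_in \<Omega> F G S \<longleftrightarrow> generating_sequence \<Omega> S \<and> S 0 = (F, G)"

end

theory Submission
  imports Defs "HOL-Complex_Analysis.Complex_Analysis"
begin

text \<open>
  Each pair of the sequence has the form F = P R, G = i P / R with P = (\<Phi>')^m holomorphic and
  nonvanishing and R real and nonvanishing. For such pairs a = 0, b = (P / cnj P) R_zbar / R and
  B = (P / cnj P) R_z / R. If R = A(u) B(v), the Cauchy-Riemann equations for \<Phi> give
  R_zbar / R = cnj \<Phi>' (\<alpha> + i \<beta>) / 2 and R_z / R = \<Phi>' (\<alpha> - i \<beta>) / 2, where \<alpha> = A'/A and
  \<beta> = B'/B. Passing from m to m + 1 multiplies P by \<Phi>' and replaces U by 1/U, that is \<alpha> by -\<alpha>,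
  and this turns b of the (m+1)-st pair into -B of the m-th.
\<close>

definition product_pair :: "(complex \<Rightarrow> complex) \<Rightarrow> (complex \<Rightarrow> real)
    \<Rightarrow> (complex \<Rightarrow> complex) \<times> (complex \<Rightarrow> complex)" where
  "product_pair P R = ((\<lambda>w. P w * of_real (R w)), (\<lambda>w. \<i> * P w / of_real (R w)))"

lemma has_vector_derivative_along_line:
  assumes "(f has_field_derivative f') (at z)"
  shows "((\<lambda>t. f (z + of_real t * d)) has_vector_derivative d * f') (at 0)"
proof -
  have "((\<lambda>t::real. z + of_real t * d) has_vector_derivative d) (at 0)"
    by (auto intro!: derivative_eq_intros)
  from field_vector_diff_chain_at[OF this] assms show ?thesis
    by (simp add: o_def)
qed

lemma px_eqI: "((\<lambda>t. f (z + of_real t * 1)) has_vector_derivative X) (at 0) \<Longrightarrow> px f z = X"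
  unfolding px_def by (simp add: vector_derivative_at)

lemma py_eqI: "((\<lambda>t. f (z + of_real t * \<i>)) has_vector_derivative X) (at 0) \<Longrightarrow> py f z = X"
  unfolding py_def by (simp add: vector_derivative_at mult.commute)

lemma product_pair_line_derivatives:
  fixes R :: "complex \<Rightarrow> real"
  assumes P: "(P has_field_derivative p) (at z)"
    and R: "((\<lambda>t. R (z + of_real t * d)) has_real_derivative r) (at 0)" and "R z \<noteq> 0"
    and FG: "product_pair P R = (F, G)"
  shows "((\<lambda>t. F (z + of_real t * d)) has_vector_derivative
           P z * of_real r + d * p * of_real (R z)) (at 0)"
    and "((\<lambda>t. G (z + of_real t * d)) has_vector_derivative
           \<i> * (d * p / of_real (R z) - P z * of_real r / of_real (R z) ^ 2)) (at 0)"
proof -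
  note P' = has_vector_derivative_along_line[OF P, of d]
  have R': "((\<lambda>t. complex_of_real (R (z + of_real t * d))) has_vector_derivative of_real r) (at 0)"
    using R by (rule has_vector_derivative_of_real)
  from FG have F: "F = (\<lambda>w. P w * of_real (R w))" and G: "G = (\<lambda>w. \<i> * P w / of_real (R w))"
    by (auto simp: product_pair_def)
  show "((\<lambda>t. F (z + of_real t * d)) has_vector_derivative
           P z * of_real r + d * p * of_real (R z)) (at 0)"
    unfolding F using has_vector_derivative_mult[OF P' R'] by simp
  show "((\<lambda>t. G (z + of_real t * d)) has_vector_derivative
           \<i> * (d * p / of_real (R z) - P z * of_real r / of_real (R z) ^ 2)) (at 0)"
  proof -
    have "((\<lambda>t. inverse (R (z + of_real t * d))) has_real_derivative - r / (R z)\<^sup>2) (at 0)"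
      using DERIV_inverse_fun[OF R] \<open>R z \<noteq> 0\<close> by (simp add: divide_inverse power2_eq_square)
    from has_vector_derivative_mult_right[OF
        has_vector_derivative_mult[OF P' has_vector_derivative_of_real[OF this]], of \<i>]
    have "((\<lambda>t. \<i> * (P (z + of_real t * d) * of_real (inverse (R (z + of_real t * d)))))
        has_vector_derivative \<i> * (P z * of_real (- r / (R z)\<^sup>2) + d * p * of_real (inverse (R z)))) (at 0)"
      by simp
    moreover have "\<i> * (P z * of_real (- r / (R z)\<^sup>2) + d * p * of_real (inverse (R z))) =
        \<i> * (d * p / of_real (R z) - P z * of_real r / of_real (R z) ^ 2)"
      by (simp add: divide_inverse)
    ultimately show ?thesis
      unfolding G by (simp add: divide_inverse mult.assoc)
  qed
qed

lemma product_pair_partials: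
  fixes R :: "complex \<Rightarrow> real"
  assumes P: "(P has_field_derivative p) (at z)"
    and Rx: "((\<lambda>t. R (z + of_real t * 1)) has_real_derivative rx) (at 0)"
    and Ry: "((\<lambda>t. R (z + of_real t * \<i>)) has_real_derivative ry) (at 0)"
    and R: "R z \<noteq> 0"
    and FG: "product_pair P R = (F, G)"
  shows "px F z = P z * of_real rx + p * of_real (R z)"
    and "py F z = P z * of_real ry + \<i> * p * of_real (R z)"
    and "px G z = \<i> * (p / of_real (R z) - P z * of_real rx / of_real (R z) ^ 2)"
    and "py G z = \<i> * (\<i> * p / of_real (R z) - P z * of_real ry / of_real (R z) ^ 2)"
    and "(\<lambda>t. F (z + of_real t)) differentiable (at 0)"
    and "(\<lambda>t. F (z + \<i> * of_real t)) differentiable (at 0)"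
    and "(\<lambda>t. G (z + of_real t)) differentiable (at 0)"
    and "(\<lambda>t. G (z + \<i> * of_real t)) differentiable (at 0)"
proof -
  note Fx = product_pair_line_derivatives(1)[OF P Rx R FG]
    and Fy = product_pair_line_derivatives(1)[OF P Ry R FG]
    and Gx = product_pair_line_derivatives(2)[OF P Rx R FG]
    and Gy = product_pair_line_derivatives(2)[OF P Ry R FG]
  show "px F z = P z * of_real rx + p * of_real (R z)"
    using px_eqI[OF Fx] by simp
  show "py F z = P z * of_real ry + \<i> * p * of_real (R z)"
    using py_eqI[OF Fy] by simp
  show "px G z = \<i> * (p / of_real (R z) - P z * of_real rx / of_real (R z) ^ 2)"
    using px_eqI[OF Gx] by simp
  show "py G z = \<i> * (\<i> * p / of_real (R z) - P z * of_real ry / of_real (R z) ^ 2)"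
    using py_eqI[OF Gy] by simp
  show "(\<lambda>t. F (z + of_real t)) differentiable (at 0)"
    "(\<lambda>t. F (z + \<i> * of_real t)) differentiable (at 0)"
    "(\<lambda>t. G (z + of_real t)) differentiable (at 0)"
    "(\<lambda>t. G (z + \<i> * of_real t)) differentiable (at 0)"
    using Fx Fy Gx Gy unfolding differentiable_def has_vector_derivative_def
    by (auto simp: mult.commute)
qed

lemma product_pair_chars:
  fixes R :: "complex \<Rightarrow> real"
  assumes P: "(P has_field_derivative p) (at z)" "P z \<noteq> 0"
    and Rx: "((\<lambda>t. R (z + of_real t * 1)) has_real_derivative rx) (at 0)"
    and Ry: "((\<lambda>t. R (z + of_real t * \<i>)) has_real_derivative ry) (at 0)"
    and R: "R z \<noteq> 0"
    and FG: "product_pair P R = (F, G)"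
  shows "char_a F G z = 0"
    and "char_b F G z = P z / cnj (P z) * (of_real rx + \<i> * of_real ry) / (2 * of_real (R z))"
    and "char_B F G z = P z / cnj (P z) * (of_real rx - \<i> * of_real ry) / (2 * of_real (R z))"
proof -
  note partials = product_pair_partials(1-4)[OF P(1) Rx Ry R FG]
  from FG have F: "F z = P z * of_real (R z)" and G: "G z = \<i> * P z / of_real (R z)"
    by (auto simp: product_pair_def)
  have "cnj (P z) \<noteq> 0" "complex_of_real (R z) \<noteq> 0"
    using P(2) R by simp_all
  then show "char_a F G z = 0"
    "char_b F G z = P z / cnj (P z) * (of_real rx + \<i> * of_real ry) / (2 * of_real (R z))"
    "char_B F G z = P z / cnj (P z) * (of_real rx - \<i> * of_real ry) / (2 * of_real (R z))"
    unfolding char_a_def char_b_def char_B_def dzbar_def dz_def partials F G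
    using P(2) by (simp_all add: field_simps power2_eq_square)
qed

lemma product_pair_Im_pos:
  fixes R :: "complex \<Rightarrow> real"
  assumes "P z \<noteq> 0" "R z \<noteq> 0" "product_pair P R = (F, G)"
  shows "Im (cnj (F z) * G z) > 0"
proof -
  have "Im (cnj (F z) * G z) = (Re (P z))\<^sup>2 + (Im (P z))\<^sup>2"
    using assms by (auto simp: product_pair_def field_simps power2_eq_square)
  then show ?thesis
    using assms(1) complex_neq_0 by simp
qed

lemma separable_line_derivative:
  assumes \<Phi>: "(\<Phi> has_field_derivative \<phi>) (at z)"
    and A: "(A has_real_derivative a) (at (Re (\<Phi> z)))"
    and B: "(B has_real_derivative b) (at (Im (\<Phi> z)))"
  shows "((\<lambda>t. A (Re (\<Phi> (z + of_real t * d))) * B (Im (\<Phi> (z + of_real t * d))))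
           has_real_derivative a * Re (d * \<phi>) * B (Im (\<Phi> z)) + A (Re (\<Phi> z)) * b * Im (d * \<phi>)) (at 0)"
proof -
  note \<Phi>' = has_vector_derivative_along_line[OF \<Phi>, of d]
  have "((\<lambda>t. Re (\<Phi> (z + of_real t * d))) has_real_derivative Re (d * \<phi>)) (at 0)"
    using bounded_linear.has_vector_derivative[OF bounded_linear_Re \<Phi>']
    by (simp add: has_real_derivative_iff_has_vector_derivative)
  from DERIV_chain2[of A, OF _ this] A
  have A': "((\<lambda>t. A (Re (\<Phi> (z + of_real t * d)))) has_real_derivative a * Re (d * \<phi>)) (at 0)"
    by simp
  have "((\<lambda>t. Im (\<Phi> (z + of_real t * d))) has_real_derivative Im (d * \<phi>)) (at 0)"
    using bounded_linear.has_vector_derivative[OF bounded_linear_Im \<Phi>']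
    by (simp add: has_real_derivative_iff_has_vector_derivative)
  from DERIV_chain2[of B, OF _ this] B
  have B': "((\<lambda>t. B (Im (\<Phi> (z + of_real t * d)))) has_real_derivative b * Im (d * \<phi>)) (at 0)"
    by simp
  from DERIV_mult[OF A' B'] show ?thesis
    by (simp add: mult_ac)
qed

lemma separable_product_pair_chars:
  assumes \<Phi>: "(\<Phi> has_field_derivative \<phi>) (at z)"
    and P: "(P has_field_derivative p) (at z)" "P z \<noteq> 0"
    and A: "(A has_real_derivative a) (at (Re (\<Phi> z)))" "A (Re (\<Phi> z)) \<noteq> 0"
    and B: "(B has_real_derivative b) (at (Im (\<Phi> z)))" "B (Im (\<Phi> z)) \<noteq> 0"
    and FG: "product_pair P (\<lambda>w. A (Re (\<Phi> w)) * B (Im (\<Phi> w))) = (F, G)"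
  shows "char_a F G z = 0"
    and "char_b F G z = P z / cnj (P z) * cnj \<phi> *
           (of_real (a / A (Re (\<Phi> z))) + \<i> * of_real (b / B (Im (\<Phi> z)))) / 2"
    and "char_B F G z = P z / cnj (P z) * \<phi> *
           (of_real (a / A (Re (\<Phi> z))) - \<i> * of_real (b / B (Im (\<Phi> z)))) / 2"
proof -
  note Rx = separable_line_derivative[OF \<Phi> A(1) B(1), of 1]
    and Ry = separable_line_derivative[OF \<Phi> A(1) B(1), of \<i>]
  have "A (Re (\<Phi> z)) * B (Im (\<Phi> z)) \<noteq> 0"
    using A(2) B(2) by simp
  note chars = product_pair_chars[OF P Rx Ry this FG]
  let ?A = "A (Re (\<Phi> z))" and ?B = "B (Im (\<Phi> z))"
  \<comment> \<open>2 R_zbar and 2 R_z; they factor through cnj \<phi> and \<phi> by the Cauchy-Riemann equations\<close>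
  have dzbar_R: "of_real (a * Re (1 * \<phi>) * ?B + ?A * b * Im (1 * \<phi>)) +
        \<i> * of_real (a * Re (\<i> * \<phi>) * ?B + ?A * b * Im (\<i> * \<phi>)) =
      cnj \<phi> * (of_real (a * ?B) + \<i> * of_real (?A * b))"
    by (simp add: complex_eq_iff algebra_simps)
  have dz_R: "of_real (a * Re (1 * \<phi>) * ?B + ?A * b * Im (1 * \<phi>)) -
        \<i> * of_real (a * Re (\<i> * \<phi>) * ?B + ?A * b * Im (\<i> * \<phi>)) =
      \<phi> * (of_real (a * ?B) - \<i> * of_real (?A * b))"
    by (simp add: complex_eq_iff algebra_simps)
  show "char_a F G z = 0"
    using chars(1) by simp
  show "char_b F G z = P z / cnj (P z) * cnj \<phi> *
           (of_real (a / A (Re (\<Phi> z))) + \<i> * of_real (b / B (Im (\<Phi> z)))) / 2"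
    unfolding chars(2) dzbar_R using A(2) B(2)
    by (simp add: field_simps)
  show "char_B F G z = P z / cnj (P z) * \<phi> *
           (of_real (a / A (Re (\<Phi> z))) - \<i> * of_real (b / B (Im (\<Phi> z)))) / 2"
    unfolding chars(3) dz_R using A(2) B(2)
    by (simp add: field_simps)
qed

lemma generating_pair_separable_product_pair:
  assumes \<Omega>: "open \<Omega>" and \<Phi>: "\<Phi> holomorphic_on \<Omega>"
    and P: "P holomorphic_on \<Omega>" "\<forall>z\<in>\<Omega>. P z \<noteq> 0"
    and A: "\<And>t. (A has_real_derivative A' t) (at t)" "\<And>t. A t \<noteq> 0"
    and B: "\<And>t. (B has_real_derivative B' t) (at t)" "\<And>t. B t \<noteq> 0"
    and FG: "product_pair P (\<lambda>w. A (Re (\<Phi> w)) * B (Im (\<Phi> w))) = (F, G)"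
  shows "generating_pair \<Omega> F G"
  unfolding generating_pair_def has_partials_on_def
proof (intro conjI ballI)
  fix z assume "z \<in> \<Omega>"
  then have \<Phi>': "(\<Phi> has_field_derivative deriv \<Phi> z) (at z)"
    and P': "(P has_field_derivative deriv P z) (at z)"
    using holomorphic_derivI \<Omega> \<Phi> P(1) by blast+
  note Rx = separable_line_derivative[OF \<Phi>' A(1) B(1), of 1]
    and Ry = separable_line_derivative[OF \<Phi>' A(1) B(1), of \<i>]
  have R_nz: "A (Re (\<Phi> z)) * B (Im (\<Phi> z)) \<noteq> 0"
    using A(2) B(2) by simp
  note partials = product_pair_partials(5-8)[OF P' Rx Ry R_nz FG]
  show "(\<lambda>t. F (z + of_real t)) differentiable (at 0)"
    "(\<lambda>t. F (z + \<i> * of_real t)) differentiable (at 0)"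
    "(\<lambda>t. G (z + of_real t)) differentiable (at 0)"
    "(\<lambda>t. G (z + \<i> * of_real t)) differentiable (at 0)"
    by (fact partials)+
  show "Im (cnj (F z) * G z) > 0"
    using product_pair_Im_pos[OF _ R_nz FG] P(2) \<open>z \<in> \<Omega>\<close> by blast
qed

lemma successor_separable_product_pairs:
  assumes \<Omega>: "open \<Omega>" and \<Phi>: "\<Phi> holomorphic_on \<Omega>"
    and P: "P holomorphic_on \<Omega>" "\<forall>z\<in>\<Omega>. P z \<noteq> 0"
    and P1: "P1 holomorphic_on \<Omega>" "\<forall>z\<in>\<Omega>. P1 z = deriv \<Phi> z * P z"
    and \<Phi>_nz: "\<forall>z\<in>\<Omega>. deriv \<Phi> z \<noteq> 0"
    and A: "\<And>t. (A has_real_derivative A' t) (at t)" "\<And>t. A t \<noteq> 0"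
    and A1: "\<And>t. (A1 has_real_derivative A1' t) (at t)" "\<And>t. A1 t \<noteq> 0"
    and log_deriv: "\<And>t. A1' t / A1 t = - (A' t / A t)"
    and B: "\<And>t. (B has_real_derivative B' t) (at t)" "\<And>t. B t \<noteq> 0"
    and FG: "product_pair P (\<lambda>w. A (Re (\<Phi> w)) * B (Im (\<Phi> w))) = (F, G)"
    and FG1: "product_pair P1 (\<lambda>w. A1 (Re (\<Phi> w)) * B (Im (\<Phi> w))) = (F1, G1)"
  shows "successor \<Omega> F1 G1 F G"
proof -
  have P1_nz: "\<forall>z\<in>\<Omega>. P1 z \<noteq> 0"
    using P(2) P1(2) \<Phi>_nz by simp
  have char_relations: "char_a F1 G1 z = char_a F G z \<and> char_b F1 G1 z = - char_B F G z"
    if "z \<in> \<Omega>" for z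
  proof -
    let ?\<phi> = "deriv \<Phi> z" and ?\<alpha> = "A' (Re (\<Phi> z)) / A (Re (\<Phi> z))"
      and ?\<beta> = "B' (Im (\<Phi> z)) / B (Im (\<Phi> z))"
    have \<Phi>': "(\<Phi> has_field_derivative ?\<phi>) (at z)"
      and P': "(P has_field_derivative deriv P z) (at z)"
      and P1': "(P1 has_field_derivative deriv P1 z) (at z)"
      using holomorphic_derivI \<Omega> \<Phi> P(1) P1(1) \<open>z \<in> \<Omega>\<close> by blast+
    note chars0 = separable_product_pair_chars[OF \<Phi>' P' _ A(1) A(2) B(1) B(2) FG]
    note chars1 = separable_product_pair_chars[OF \<Phi>' P1' _ A1(1) A1(2) B(1) B(2) FG1]
    have "cnj ?\<phi> \<noteq> 0" "cnj (P z) \<noteq> 0"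
      using \<Phi>_nz P(2) \<open>z \<in> \<Omega>\<close> by simp_all
    then have "P1 z / cnj (P1 z) * cnj ?\<phi> * (of_real (- ?\<alpha>) + \<i> * of_real ?\<beta>) / 2 =
        - (P z / cnj (P z) * ?\<phi> * (of_real ?\<alpha> - \<i> * of_real ?\<beta>) / 2)"
      using P1(2) \<open>z \<in> \<Omega>\<close> by (simp add: field_simps)
    then show ?thesis
      using chars0 chars1 P(2) P1_nz log_deriv \<open>z \<in> \<Omega>\<close> by simp
  qed
  show ?thesis
    unfolding successor_def
    using generating_pair_separable_product_pair[OF \<Omega> \<Phi> P A B FG]
      generating_pair_separable_product_pair[OF \<Omega> \<Phi> P1(1) P1_nz A1 B FG1] char_relations
    by blast
qed

theorem theorem20:
  fixes \<Omega> :: "complex set" and \<Phi> :: "complex \<Rightarrow> complex" and U V :: "real \<Rightarrow> real"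
    and F G :: "complex \<Rightarrow> complex"
    and S :: "int \<Rightarrow> (complex \<Rightarrow> complex) \<times> (complex \<Rightarrow> complex)"
  assumes dom: "open \<Omega>" "connected \<Omega>" "\<Omega> \<noteq> {}"
    and hol: "\<Phi> holomorphic_on \<Omega>"
    and bdd: "\<exists>M. \<forall>z\<in>\<Omega>. norm (deriv \<Phi> z) \<le> M"
    and nz: "\<forall>z\<in>\<Omega>. deriv \<Phi> z \<noteq> 0"
    and Ud: "\<forall>t. U differentiable (at t)" and Un: "\<forall>t. U t \<noteq> 0"
    and Vd: "\<forall>t. V differentiable (at t)" and Vn: "\<forall>t. V t \<noteq> 0"
    and F_def: "F = (\<lambda>z. complex_of_real (U (Re (\<Phi> z)) * V (Im (\<Phi> z))))"
    and G_def: "G = (\<lambda>z. \<i> / complex_of_real (U (Re (\<Phi> z)) * V (Im (\<Phi> z))))"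
    and S_def: "S = (\<lambda>m. if even m
        then ((\<lambda>z. deriv \<Phi> z powi m * F z), (\<lambda>z. deriv \<Phi> z powi m * G z))
        else ((\<lambda>z. deriv \<Phi> z powi m / complex_of_real ((U (Re (\<Phi> z)))\<^sup>2) * F z),
              (\<lambda>z. deriv \<Phi> z powi m * complex_of_real ((U (Re (\<Phi> z)))\<^sup>2) * G z)))"
  shows "(\<forall>m. generating_pair \<Omega> (fst (S m)) (snd (S m)) \<and>
             successor \<Omega> (fst (S (m+1))) (snd (S (m+1))) (fst (S m)) (snd (S m)))
         \<and> generating_sequence \<Omega> S \<and> embedded_in \<Omega> F G S"
proof -
  \<comment> \<open>The odd terms are the even ones with U replaced by 1/U.\<close>
  define Um where "Um m = (if even m then U else (\<lambda>t. inverse (U t)))" for m :: int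
  define Um' where "Um' m t = (if even m then deriv U t else - deriv U t / (U t)\<^sup>2)" for m :: int and t
  define Pm where "Pm m = (\<lambda>w. deriv \<Phi> w powi m)" for m :: int
  have U': "(U has_real_derivative deriv U t) (at t)"
    and V': "(V has_real_derivative deriv V t) (at t)" for t
    using Ud Vd DERIV_deriv_iff_real_differentiable by blast+
  have Um: "(Um m has_real_derivative Um' m t) (at t)" "Um m t \<noteq> 0" for m t
    using U' DERIV_inverse_fun[OF U'] Un
    by (auto simp: Um_def Um'_def divide_inverse power2_eq_square)
  have log_deriv: "Um' (m + 1) t / Um (m + 1) t = - (Um' m t / Um m t)" for m t
    using Un by (simp add: Um_def Um'_def field_simps power2_eq_square)
  have Pm: "Pm m holomorphic_on \<Omega>" "\<forall>z\<in>\<Omega>. Pm m z \<noteq> 0"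
    "\<forall>z\<in>\<Omega>. Pm (m + 1) z = deriv \<Phi> z * Pm m z" for m
    using holomorphic_on_power_int[OF _ holomorphic_deriv[OF hol dom(1)], of m] nz
    by (auto simp: Pm_def power_int_add)
  have S: "product_pair (Pm m) (\<lambda>w. Um m (Re (\<Phi> w)) * V (Im (\<Phi> w))) = (fst (S m), snd (S m))"
    for m
    using Un Vn
    by (auto simp: product_pair_def S_def F_def G_def Pm_def Um_def field_simps power2_eq_square)
  have succ: "successor \<Omega> (fst (S (m + 1))) (snd (S (m + 1))) (fst (S m)) (snd (S m))" for m
    by (rule successor_separable_product_pairs[OF dom(1) hol Pm(1,2)[of m] Pm(1)[of "m + 1"]
          Pm(3)[of m] nz Um[of m] Um[of "m + 1"] log_deriv[of m] V' Vn[rule_format] S[of m] S[of "m + 1"]])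
  then have "generating_pair \<Omega> (fst (S m)) (snd (S m))" for m
    by (simp add: successor_def)
  moreover have "S 0 = (F, G)"
    by (simp add: S_def)
  ultimately show ?thesis
    using succ by (simp add: generating_sequence_def embedded_in_def)
qed

end
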